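(* Assume the setting of the context. If Assumption (A5) holds, then for every compact interval $I\subset(0,\infty)$ and $r>0$, \[\lim_{\delta\to0}\limsup_{n\to\infty}\sup_{\substack{x,y,z\in B_{G^n}(\rho,\alpha(n)r):\\ d_{G^n}(y,z)\le\alpha(n)\delta}}\sup_{t\in I}\beta(n)\left|q^n_{\lfloor\gamma(n)t\rfloor}(x,y)-q^n_{\lfloor\gamma(n)t\rfloor}(x,z)\right|=0.\]
   Context: Let $(E,d_E)$ be a metric space and $F\subseteq E$ such that $F\cap\overline{B}_E(x,r)$ is compact for all $x\in E$, $r>0$ ($\overline{B}_E$, $B_E$ closed and open balls in $E$). Let $d_F:=d_E|_{F\times F}$, $\rho\in F$, and $\nu$ a Radon measure of full support on $(F,d_F)$ (extended to $E$ by $\nu(A):=\nu(A\cap F)$). For a locally finite connected graph $G$ with at least two vertices: $d_G$ is the shortest-path metric, $B_G(x,r)$ the open $d_G$-ball; $\mu^G$ a symmetric weight with $\mu^G_{xy}>0$ iff $\{x,y\}$ is an edge; $\mu^G_x:=\sum_y\mu^G_{xy}$; $\nu^G(A):=\sum_{x\in A}\mu^G_x$; $X^G$ the discrete time simple random walk with $P_G(x,y)=\mu^G_{xy}/\mu^G_x$, law $\mathbf{P}^G_x$; $p^G_m(x,y):=\mathbf{P}^G_x(X^G_m=y)/\nu^G(\{y\})$, $q^G_m(x,y):=\frac12(p^G_m+p^G_{m+1})(x,y)$; generator $\mathcal{L}_Gf(x)=\sum_yP_G(x,y)(f(y)-f(x))$; $(f,g)_G:=\sum_xf(x)g(x)\nu^G(\{x\})$;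 $\mathcal{E}_G(f,g):=-(\mathcal{L}_Gf,g)_G$ on $\mathcal{F}_G:=\{f:\mathcal{E}_G(f,f)<\infty\}$; resistance metric $R_G(x,y):=\sup\{|f(x)-f(y)|^2/\mathcal{E}_G(f,f):f\in\mathcal{F}_G,\mathcal{E}_G(f,f)>0\}$. $(G^n)_{n\ge1}$ are such graphs with $V(G^n)\subseteq E$ and distinguished vertex $\rho$; $\nu^n:=\nu^{G^n}$, $q^n:=q^{G^n}$. $(\alpha(n)),(\beta(n)),(\gamma(n))$ are non-negative sequences diverging to $\infty$. Assumption (A5): (i) there is $c>0$ with $d_{G^n}(x,y)\ge c\alpha(n)d_E(x,y)$ for all $x,y\in V(G^n)$, $n\ge1$, and a non-negative $\tilde\alpha(n)=o(\alpha(n))$ such that for each $r>0$ there are $c'<\infty$, $n_0$ with $d_{G^n}(x,y)\le c'\alpha(n)d_E(x,y)+\tilde\alpha(n)$ for all $x,y\in V(G^n)\cap B_E(\rho,r)$, $n\ge n_0$; (ii) for every $x\in F$, $r>0$, $\lim_n\beta(n)^{-1}\nu^n(B_E(x,r))=\nu(B_E(x,r))$; (iii) for some $\kappa\in(0,\infty)$ there exist constants $c_1,c_2,c_3\in(0,\infty)$ and an integer $n_0$ such that $R_{G^n}(x,y)\le c_1d_{G^n}(x,y)^\kappa$ for all $x,y\in V(G^n)$, and $c_2\gamma(n)\le\alpha(n)^\kappa\beta(n)\le c_3\gamma(n)$, for all $n\ge n_0$. *)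

theory Defs
  imports "HOL-Analysis.Analysis" "HOL-Library.Landau_Symbols"
begin

definition adj :: "('a \<Rightarrow> 'a \<Rightarrow> real) \<Rightarrow> ('a \<times> 'a) set" where
  "adj \<mu> = {(x, y). \<mu> x y > 0}"

definition weighted_graph :: "'a set \<Rightarrow> ('a \<Rightarrow> 'a \<Rightarrow> real) \<Rightarrow> bool" where
  "weighted_graph V \<mu> \<longleftrightarrow>
     (\<forall>x y. \<mu> x y = \<mu> y x) \<and> (\<forall>x y. 0 \<le> \<mu> x y) \<and>
     (\<forall>x y. \<mu> x y > 0 \<longrightarrow> x \<in> V \<and> y \<in> V) \<and>
     (\<forall>x\<in>V. finite {y. \<mu> x y > 0}) \<and>
     (\<forall>x\<in>V. \<forall>y\<in>V. (x, y) \<in> (adj \<mu>)\<^sup>*) \<and>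
     (\<exists>x\<in>V. \<exists>y\<in>V. x \<noteq> y)"

definition gdist :: "('a \<Rightarrow> 'a \<Rightarrow> real) \<Rightarrow> 'a \<Rightarrow> 'a \<Rightarrow> nat" where
  "gdist \<mu> x y = (LEAST k. (x, y) \<in> (adj \<mu>) ^^ k)"

definition gball :: "'a set \<Rightarrow> ('a \<Rightarrow> 'a \<Rightarrow> real) \<Rightarrow> 'a \<Rightarrow> real \<Rightarrow> 'a set" where
  "gball V \<mu> x r = {y \<in> V. real (gdist \<mu> x y) < r}"

definition muv :: "('a \<Rightarrow> 'a \<Rightarrow> real) \<Rightarrow> 'a \<Rightarrow> real" where
  "muv \<mu> x = (\<Sum>y\<in>{y. \<mu> x y > 0}. \<mu> x y)"

definition nuG :: "'a set \<Rightarrow> ('a \<Rightarrow> 'a \<Rightarrow> real) \<Rightarrow> 'a set \<Rightarrow> ennreal" where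
  "nuG V \<mu> A = (\<Sum>\<^sub>\<infinity>x\<in>A \<inter> V. ennreal (muv \<mu> x))"

definition Ptr :: "('a \<Rightarrow> 'a \<Rightarrow> real) \<Rightarrow> 'a \<Rightarrow> 'a \<Rightarrow> real" where
  "Ptr \<mu> x y = \<mu> x y / muv \<mu> x"

primrec walk_prob :: "('a \<Rightarrow> 'a \<Rightarrow> real) \<Rightarrow> nat \<Rightarrow> 'a \<Rightarrow> 'a \<Rightarrow> real" where
  "walk_prob \<mu> 0 x y = (if x = y then 1 else 0)"
| "walk_prob \<mu> (Suc m) x y = (\<Sum>z\<in>{z. \<mu> x z > 0}. Ptr \<mu> x z * walk_prob \<mu> m z y)"

definition hk :: "('a \<Rightarrow> 'a \<Rightarrow> real) \<Rightarrow> nat \<Rightarrow> 'a \<Rightarrow> 'a \<Rightarrow> real" where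
  "hk \<mu> m x y = walk_prob \<mu> m x y / muv \<mu> y"

definition qhk :: "('a \<Rightarrow> 'a \<Rightarrow> real) \<Rightarrow> nat \<Rightarrow> 'a \<Rightarrow> 'a \<Rightarrow> real" where
  "qhk \<mu> m x y = (hk \<mu> m x y + hk \<mu> (Suc m) x y) / 2"

definition energy :: "('a \<Rightarrow> 'a \<Rightarrow> real) \<Rightarrow> ('a \<Rightarrow> real) \<Rightarrow> ennreal" where
  "energy \<mu> f = (\<Sum>\<^sub>\<infinity>(x, y)\<in>UNIV. ennreal (\<mu> x y * (f x - f y)\<^sup>2)) / 2"

definition resistance :: "('a \<Rightarrow> 'a \<Rightarrow> real) \<Rightarrow> 'a \<Rightarrow> 'a \<Rightarrow> ereal" where
  "resistance \<mu> x y =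
     Sup {ereal ((f x - f y)\<^sup>2 / enn2real (energy \<mu> f)) | f. 0 < energy \<mu> f \<and> energy \<mu> f < top}"

definition radon_full_support :: "'a::metric_space set \<Rightarrow> 'a measure \<Rightarrow> bool" where
  "radon_full_support F \<nu> \<longleftrightarrow>
     sets \<nu> = sets borel \<and>
     (\<forall>A\<in>sets borel. emeasure \<nu> A = emeasure \<nu> (A \<inter> F)) \<and>
     (\<forall>K. compact K \<longrightarrow> emeasure \<nu> K < \<infinity>) \<and>
     (\<forall>A\<in>sets borel. emeasure \<nu> A = (SUP K\<in>{K. compact K \<and> K \<subseteq> A}. emeasure \<nu> K)) \<and>
     (\<forall>x\<in>F. \<forall>r>0. emeasure \<nu> (ball x r) > 0)"

end

theory Submission
  imports Defs
begin

text \<open>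
  Write \<open>h\<^sub>m = p\<^sub>m(x, \<cdot>)\<close>, so that \<open>2 q\<^sub>m(x, \<cdot>) = h\<^sub>m + h\<^sub>m\<^sub>+\<^sub>1\<close>. The resistance bound gives
  \<open>|f y - f z|\<^sup>2 \<le> R(y, z) E(f)\<close>, and by reversibility and the Chapman-Kolmogorov equations the
  energy of \<open>h\<^sub>m + h\<^sub>m\<^sub>+\<^sub>1\<close> is the drop \<open>c\<^sub>m - c\<^sub>m\<^sub>+\<^sub>1\<close> of \<open>c\<^sub>j = p\<^sub>2\<^sub>j(x, x) + p\<^sub>2\<^sub>j\<^sub>+\<^sub>1(x, x)\<close>.
  These drops decrease, so the drop at \<open>2k\<close> is at most \<open>c\<^sub>k / k\<close>. On a set \<open>S\<close> of measure \<open>v\<close>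
  within graph distance \<open>L\<close> of \<open>x\<close> the resistance bound keeps \<open>h\<^sub>2\<^sub>k + h\<^sub>2\<^sub>k\<^sub>+\<^sub>1\<close> above
  \<open>c\<^sub>k - (c\<^sub>1 L\<^sup>\<kappa> c\<^sub>k / k)\<^sup>1\<^sup>/\<^sup>2\<close>, while its total mass is 2; hence \<open>c\<^sub>k \<le> 4 / v + 4 c\<^sub>1 L\<^sup>\<kappa> / k\<close>.
  For the n-th graph take \<open>k \<approx> \<gamma>(n) t / 2\<close>, \<open>v \<ge> \<epsilon> \<beta>(n)\<close> by (A5ii), \<open>L \<le> C \<alpha>(n)\<close> by (A5i),
  and \<open>R(y, z) \<le> c\<^sub>1 (\<alpha>(n) \<delta>)\<^sup>\<kappa>\<close>; with \<open>\<alpha>(n)\<^sup>\<kappa> \<beta>(n) \<le> c\<^sub>3 \<gamma>(n)\<close> this gives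
  \<open>\<beta>(n) |q(x, y) - q(x, z)| \<le> C' \<delta>\<^sup>\<kappa>\<^sup>/\<^sup>2\<close> uniformly for large n.
\<close>

lemma le_of_le_div_add_sqrt:
  fixes Y P Q :: real
  assumes "0 \<le> Y" "0 < P" "0 \<le> Q" "Y \<le> 2 / P + sqrt (Q * Y / 4)"
  shows "Y \<le> 4 / P + Q"
proof (cases "Y \<le> 4 / P")
  case False
  then have "2 / P < Y / 2"
    by simp
  then have "Y / 2 < sqrt (Q * Y / 4)"
    using assms(4) by linarith
  then have "(Y / 2)\<^sup>2 < Q * Y / 4"
    using assms by (metis abs_of_nonneg divide_nonneg_nonneg real_sqrt_abs real_sqrt_less_iff zero_le_numeral)
  then have "Y < Q"
    using assms by (simp add: power2_eq_square field_simps) (smt (verit) mult_less_cancel_right_pos)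
  then show ?thesis
    using assms by (smt (verit) divide_pos_pos)
qed (use assms in simp)

lemma muv_nonneg: "0 \<le> muv \<mu> x"
  unfolding muv_def by (rule sum_nonneg) simp

section \<open>Random walks on weighted graphs\<close>

locale graph_walk =
  fixes V :: "'a set" and \<mu> :: "'a \<Rightarrow> 'a \<Rightarrow> real"
  assumes weighted: "weighted_graph V \<mu>"
begin

abbreviation nbrs :: "'a \<Rightarrow> 'a set" where "nbrs x \<equiv> {y. 0 < \<mu> x y}"
abbreviation \<pi> :: "'a \<Rightarrow> real" where "\<pi> \<equiv> muv \<mu>"

lemma mu_sym: "\<mu> x y = \<mu> y x"
  using weighted unfolding weighted_graph_def by blast

lemma mu_nonneg: "0 \<le> \<mu> x y"
  using weighted unfolding weighted_graph_def by blast

lemma mu_pos_in_V: "0 < \<mu> x y \<Longrightarrow> x \<in> V \<and> y \<in> V"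
  using weighted unfolding weighted_graph_def by blast

lemma connected: "x \<in> V \<Longrightarrow> y \<in> V \<Longrightarrow> (x, y) \<in> (adj \<mu>)\<^sup>*"
  using weighted unfolding weighted_graph_def by blast

lemma nbrs_outside_V: "x \<notin> V \<Longrightarrow> nbrs x = {}"
  using mu_pos_in_V by blast

lemma finite_nbrs: "finite (nbrs x)"
proof (cases "x \<in> V")
  case True
  then show ?thesis using weighted unfolding weighted_graph_def by blast
qed (simp add: nbrs_outside_V)

lemma mu_eq_0_if_not_nbr: "y \<notin> nbrs x \<Longrightarrow> \<mu> x y = 0"
  using mu_nonneg[of x y] by simp

lemma mu_eq_0_outside_V: "x \<notin> V \<Longrightarrow> \<mu> x y = 0"
  using mu_pos_in_V mu_eq_0_if_not_nbr by blast

lemma Ptr_eq_0_if_not_nbr: "y \<notin> nbrs x \<Longrightarrow> Ptr \<mu> x y = 0"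
  using mu_eq_0_if_not_nbr[of y x] by (simp add: Ptr_def)

lemma in_adj_iff: "(x, y) \<in> adj \<mu> \<longleftrightarrow> 0 < \<mu> x y"
  by (simp add: adj_def)

lemma muv_eq_sum: "finite W \<Longrightarrow> nbrs x \<subseteq> W \<Longrightarrow> \<pi> x = (\<Sum>y\<in>W. \<mu> x y)"
  unfolding muv_def by (rule sum.mono_neutral_left) (auto intro: mu_eq_0_if_not_nbr)

lemma mu_le_muv: "\<mu> x y \<le> \<pi> x"
proof (cases "0 < \<mu> x y")
  case True
  then show ?thesis
    unfolding muv_def using member_le_sum[of y "nbrs x" "\<mu> x"] finite_nbrs mu_nonneg by auto
qed (use muv_nonneg[of \<mu> x] mu_nonneg[of x y] in linarith)

lemma muv_outside_V: "x \<notin> V \<Longrightarrow> \<pi> x = 0"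
  unfolding muv_def using nbrs_outside_V by simp

text \<open>Here the hypothesis that the graph has two vertices is used: every vertex has a neighbour.\<close>
lemma muv_pos: assumes "x \<in> V" shows "0 < \<pi> x"
proof -
  obtain y where y: "y \<in> V" "y \<noteq> x"
    using weighted unfolding weighted_graph_def by metis
  have "(x, y) \<in> (adj \<mu>)\<^sup>*"
    using connected assms y by blast
  then obtain w where "(x, w) \<in> adj \<mu>"
    using y(2) by (metis converse_rtranclE)
  then have "0 < \<mu> x w"
    by (simp add: in_adj_iff)
  then show ?thesis
    using mu_le_muv[of x w] by linarith
qed

lemma mu_eq_0_if_muv_eq_0: "\<pi> x = 0 \<Longrightarrow> \<mu> x y = 0"
  using mu_le_muv[of x y] mu_nonneg[of x y] by linarith

lemma sum_Ptr: assumes "x \<in> V" shows "(\<Sum>z\<in>nbrs x. Ptr \<mu> x z) = 1"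
  using muv_pos[OF assms] unfolding Ptr_def by (simp add: sum_divide_distrib[symmetric] muv_def)

definition reach :: "nat \<Rightarrow> 'a \<Rightarrow> 'a set" where
  "reach m x = (adj \<mu> ^^ m) `` {x}"

lemma reach_0 [simp]: "reach 0 x = {x}"
  by (simp add: reach_def)

lemma reach_Suc: "reach (Suc m) x = (\<Union>z\<in>nbrs x. reach m z)"
proof (rule set_eqI)
  fix y
  show "y \<in> reach (Suc m) x \<longleftrightarrow> y \<in> (\<Union>z\<in>nbrs x. reach m z)"
    unfolding reach_def Image_singleton_iff
  proof
    assume "(x, y) \<in> adj \<mu> ^^ Suc m"
    then obtain z where "(x, z) \<in> adj \<mu>" "(z, y) \<in> adj \<mu> ^^ m"
      using relpow_Suc_D2 by metis
    then show "y \<in> (\<Union>z\<in>nbrs x. (adj \<mu> ^^ m) `` {z})"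
      by (auto simp: in_adj_iff)
  next
    assume "y \<in> (\<Union>z\<in>nbrs x. (adj \<mu> ^^ m) `` {z})"
    then obtain z where "0 < \<mu> x z" "(z, y) \<in> adj \<mu> ^^ m"
      by auto
    then show "(x, y) \<in> adj \<mu> ^^ Suc m"
      by (intro relpow_Suc_I2) (auto simp: in_adj_iff)
  qed
qed

lemma finite_reach: "finite (reach m x)"
  by (induction m arbitrary: x) (auto simp: reach_Suc finite_nbrs)

lemma reach_Suc_of_nbr: "y \<in> reach m x \<Longrightarrow> 0 < \<mu> y w \<Longrightarrow> w \<in> reach (Suc m) x"
  unfolding reach_def by (auto simp: in_adj_iff intro: relpow_Suc_I)

lemma reach_subset_reach_Suc: "z \<in> nbrs x \<Longrightarrow> reach m z \<subseteq> reach (Suc m) x"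
  by (auto simp: reach_Suc)

lemma reach_subset_V: "x \<in> V \<Longrightarrow> reach m x \<subseteq> V"
  by (induction m arbitrary: x) (auto simp: reach_Suc dest: mu_pos_in_V)

lemma walk_prob_Suc_sum:
  "finite W \<Longrightarrow> nbrs x \<subseteq> W \<Longrightarrow>
     walk_prob \<mu> (Suc m) x y = (\<Sum>z\<in>W. Ptr \<mu> x z * walk_prob \<mu> m z y)"
  by simp (rule sum.mono_neutral_left, auto simp: Ptr_eq_0_if_not_nbr)

lemma walk_prob_nonneg: "0 \<le> walk_prob \<mu> m x y"
  by (induction m arbitrary: x)
    (auto intro!: sum_nonneg mult_nonneg_nonneg simp: Ptr_def mu_nonneg muv_nonneg)

lemma walk_prob_eq_0_outside_reach: "y \<notin> reach m x \<Longrightarrow> walk_prob \<mu> m x y = 0"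
proof (induction m arbitrary: x)
  case (Suc m)
  then show ?case
    by (auto simp: reach_Suc intro!: sum.neutral)
qed simp

lemma walk_prob_1: "walk_prob \<mu> (Suc 0) x y = Ptr \<mu> x y"
  by (cases "0 < \<mu> x y") (simp_all add: if_distrib Ptr_eq_0_if_not_nbr finite_nbrs cong: if_cong)

lemma walk_prob_outside_V: "x \<notin> V \<Longrightarrow> walk_prob \<mu> m x y = (if m = 0 \<and> x = y then 1 else 0)"
  by (cases m) (auto simp: nbrs_outside_V)

lemma walk_prob_add:
  assumes "finite W" "reach j x \<subseteq> W"
  shows "walk_prob \<mu> (j + i) x y = (\<Sum>z\<in>W. walk_prob \<mu> j x z * walk_prob \<mu> i z y)"
  using assms
proof (induction j arbitrary: x)
  case 0
  then have "(\<Sum>z\<in>W. walk_prob \<mu> 0 x z * walk_prob \<mu> i z y)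
      = (\<Sum>z\<in>W. if z = x then walk_prob \<mu> i x y else 0)"
    by (intro sum.cong) auto
  then show ?case using 0 by simp
next
  case (Suc j)
  have "walk_prob \<mu> (Suc j + i) x y = (\<Sum>z\<in>nbrs x. Ptr \<mu> x z * walk_prob \<mu> (j + i) z y)"
    by simp
  also have "\<dots> = (\<Sum>z\<in>nbrs x. Ptr \<mu> x z * (\<Sum>w\<in>W. walk_prob \<mu> j z w * walk_prob \<mu> i w y))"
  proof (intro sum.cong refl)
    fix z assume "z \<in> nbrs x"
    then have "reach j z \<subseteq> W"
      using reach_subset_reach_Suc[of z x j] Suc.prems by blast
    then show "Ptr \<mu> x z * walk_prob \<mu> (j + i) z y
        = Ptr \<mu> x z * (\<Sum>w\<in>W. walk_prob \<mu> j z w * walk_prob \<mu> i w y)"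
      using Suc.IH Suc.prems(1) by simp
  qed
  also have "\<dots> = (\<Sum>w\<in>W. (\<Sum>z\<in>nbrs x. Ptr \<mu> x z * walk_prob \<mu> j z w) * walk_prob \<mu> i w y)"
    unfolding sum_distrib_left sum_distrib_right by (subst sum.swap) (simp add: mult.assoc)
  finally show ?case by simp
qed

lemma sum_walk_prob:
  assumes "x \<in> V" "finite W" "reach m x \<subseteq> W"
  shows "(\<Sum>y\<in>W. walk_prob \<mu> m x y) = 1"
  using assms
proof (induction m arbitrary: x)
  case (Suc m)
  have "(\<Sum>y\<in>W. walk_prob \<mu> (Suc m) x y) = (\<Sum>z\<in>nbrs x. Ptr \<mu> x z * (\<Sum>y\<in>W. walk_prob \<mu> m z y))"
    unfolding sum_distrib_left by (simp, subst sum.swap, simp)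
  also have "\<dots> = (\<Sum>z\<in>nbrs x. Ptr \<mu> x z)"
  proof (intro sum.cong refl)
    fix z assume z: "z \<in> nbrs x"
    then have "z \<in> V" "reach m z \<subseteq> W"
      using mu_pos_in_V reach_subset_reach_Suc[OF z, of m] Suc.prems by auto
    then show "Ptr \<mu> x z * (\<Sum>y\<in>W. walk_prob \<mu> m z y) = Ptr \<mu> x z"
      using Suc.IH Suc.prems by simp
  qed
  finally show ?case using sum_Ptr Suc.prems by simp
qed simp

lemma muv_walk_prob_reversible: "\<pi> x * walk_prob \<mu> m x y = \<pi> y * walk_prob \<mu> m y x"
proof (induction m arbitrary: x y)
  case (Suc m)
  define U where "U = nbrs x \<union> reach m y"
  have U: "finite U" "nbrs x \<subseteq> U" "reach m y \<subseteq> U"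
    using finite_nbrs finite_reach U_def by auto
  have last_step: "walk_prob \<mu> (Suc m) y x = (\<Sum>w\<in>U. walk_prob \<mu> m y w * Ptr \<mu> w x)"
    using walk_prob_add[OF U(1,3), of "Suc 0" x] by (simp del: walk_prob.simps add: walk_prob_1)
  show ?case
  proof (cases "x \<in> V")
    case False
    then have "walk_prob \<mu> (Suc m) y x = 0"
      unfolding last_step by (simp add: Ptr_def mu_sym[of _ x] mu_eq_0_outside_V)
    then show ?thesis using False by (simp add: muv_outside_V)
  next
    case True
    have "\<pi> x * walk_prob \<mu> (Suc m) x y = (\<Sum>z\<in>U. \<mu> x z * walk_prob \<mu> m z y)"
      unfolding walk_prob_Suc_sum[OF U(1,2)] sum_distrib_left using muv_pos[OF True]
      by (simp add: Ptr_def)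
    also have "\<dots> = (\<Sum>z\<in>U. \<pi> y * (walk_prob \<mu> m y z * Ptr \<mu> z x))"
    proof (intro sum.cong refl)
      fix z
      show "\<mu> x z * walk_prob \<mu> m z y = \<pi> y * (walk_prob \<mu> m y z * Ptr \<mu> z x)"
      proof (cases "\<pi> z = 0")
        case False
        then have "walk_prob \<mu> m z y = \<pi> y * walk_prob \<mu> m y z / \<pi> z"
          using Suc.IH[of z y] by (simp add: field_simps)
        then show ?thesis using False by (simp add: Ptr_def mu_sym[of x z] field_simps)
      qed (simp add: mu_eq_0_if_muv_eq_0 mu_sym[of x z] Ptr_def)
    qed
    also have "\<dots> = \<pi> y * walk_prob \<mu> (Suc m) y x"
      by (simp only: last_step sum_distrib_left)
    finally show ?thesis .
  qed
qed simp

lemma hk_sym: "hk \<mu> m x y = hk \<mu> m y x"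
proof (cases "x \<in> V \<and> y \<in> V")
  case True
  then show ?thesis
    using muv_walk_prob_reversible[of x m y] muv_pos[of x] muv_pos[of y]
    unfolding hk_def by (simp add: field_simps)
qed (auto simp: hk_def walk_prob_outside_V muv_outside_V)

lemma hk_nonneg: "0 \<le> hk \<mu> m x y"
  unfolding hk_def by (simp add: walk_prob_nonneg muv_nonneg)

lemma hk_mult_muv: "x \<in> V \<Longrightarrow> hk \<mu> m x y * \<pi> y = walk_prob \<mu> m x y"
  using muv_pos[of y] reach_subset_V[of x m] walk_prob_eq_0_outside_reach[of y m x]
  by (cases "y \<in> V") (auto simp: hk_def muv_outside_V)

lemma hk_eq_0_outside_reach: "y \<notin> reach m x \<Longrightarrow> hk \<mu> m x y = 0"
  by (simp add: hk_def walk_prob_eq_0_outside_reach)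

lemma relpow_adj_sym: "(x, y) \<in> adj \<mu> ^^ k \<Longrightarrow> (y, x) \<in> adj \<mu> ^^ k"
proof (induction k arbitrary: y)
  case (Suc k)
  then obtain w where "(x, w) \<in> adj \<mu> ^^ k" "(w, y) \<in> adj \<mu>"
    by (meson relpow_Suc_E)
  then show ?case
    using Suc.IH in_adj_iff mu_sym by (metis relpow_Suc_I2)
qed simp

lemma gdist_relpow: assumes "x \<in> V" "y \<in> V" shows "(x, y) \<in> adj \<mu> ^^ gdist \<mu> x y"
proof -
  obtain k where "(x, y) \<in> adj \<mu> ^^ k"
    using connected[OF assms] rtrancl_power by blast
  then show ?thesis
    unfolding gdist_def by (rule LeastI)
qed

lemma gdist_le: "(x, y) \<in> adj \<mu> ^^ k \<Longrightarrow> gdist \<mu> x y \<le> k"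
  unfolding gdist_def by (rule Least_le)

lemma gdist_self [simp]: "gdist \<mu> x x = 0"
  using gdist_le[of x x 0] by simp

lemma gdist_sym: "x \<in> V \<Longrightarrow> y \<in> V \<Longrightarrow> gdist \<mu> x y = gdist \<mu> y x"
  by (meson antisym gdist_le gdist_relpow relpow_adj_sym)

lemma gdist_triangle:
  assumes "x \<in> V" "y \<in> V" "z \<in> V"
  shows "gdist \<mu> x z \<le> gdist \<mu> x y + gdist \<mu> y z"
  using gdist_relpow[OF assms(1,2)] gdist_relpow[OF assms(2,3)]
  by (intro gdist_le) (auto simp: relpow_add)

text \<open>Supported in W together with all neighbours, so that the double sum over W sees every edge
  on which f varies.\<close>
definition supported_with_nbrs :: "('a \<Rightarrow> real) \<Rightarrow> 'a set \<Rightarrow> bool" where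
  "supported_with_nbrs f W \<longleftrightarrow> (\<forall>y. f y \<noteq> 0 \<longrightarrow> y \<in> W \<and> nbrs y \<subseteq> W)"

definition dirichlet_sum :: "('a \<Rightarrow> real) \<Rightarrow> 'a set \<Rightarrow> real" where
  "dirichlet_sum f W = (\<Sum>y\<in>W. \<Sum>z\<in>W. \<mu> y z * (f y - f z)\<^sup>2) / 2"

definition l2_sum :: "('a \<Rightarrow> real) \<Rightarrow> 'a set \<Rightarrow> real" where
  "l2_sum f W = (\<Sum>y\<in>W. f y * f y * \<pi> y)"

definition cross_sum :: "('a \<Rightarrow> real) \<Rightarrow> 'a set \<Rightarrow> real" where
  "cross_sum f W = (\<Sum>y\<in>W. \<Sum>z\<in>W. f y * \<mu> y z * f z)"

lemma dirichlet_sum_nonneg: "0 \<le> dirichlet_sum f W"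
  unfolding dirichlet_sum_def by (auto intro!: sum_nonneg mult_nonneg_nonneg simp: mu_nonneg)

lemma
  assumes "finite W" "supported_with_nbrs f W"
  shows double_sum_diff_sq: "(\<Sum>y\<in>W. \<Sum>z\<in>W. \<mu> y z * (f y - f z)\<^sup>2) = 2 * (l2_sum f W - cross_sum f W)"
    and double_sum_add_sq: "(\<Sum>y\<in>W. \<Sum>z\<in>W. \<mu> y z * (f y + f z)\<^sup>2) = 2 * (l2_sum f W + cross_sum f W)"
proof -
  have diag: "(\<Sum>y\<in>W. \<Sum>z\<in>W. \<mu> y z * (f y * f y)) = l2_sum f W"
    unfolding l2_sum_def
  proof (intro sum.cong refl)
    fix y
    show "(\<Sum>z\<in>W. \<mu> y z * (f y * f y)) = f y * f y * \<pi> y"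
    proof (cases "f y = 0")
      case False
      then have "\<pi> y = (\<Sum>z\<in>W. \<mu> y z)"
        using assms unfolding supported_with_nbrs_def by (intro muv_eq_sum) auto
      then show ?thesis by (simp add: sum_distrib_right[symmetric] mult.commute)
    qed simp
  qed
  moreover have "(\<Sum>y\<in>W. \<Sum>z\<in>W. \<mu> y z * (f z * f z)) = l2_sum f W"
    using diag by (subst sum.swap) (simp add: mu_sym)
  moreover have "(\<Sum>y\<in>W. \<Sum>z\<in>W. \<mu> y z * (f y * f z)) = cross_sum f W"
    unfolding cross_sum_def by (simp add: algebra_simps)
  moreover have "(\<Sum>y\<in>W. \<Sum>z\<in>W. \<mu> y z * (f y - f z)\<^sup>2) =
     (\<Sum>y\<in>W. \<Sum>z\<in>W. \<mu> y z * (f y * f y)) + (\<Sum>y\<in>W. \<Sum>z\<in>W. \<mu> y z * (f z * f z))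
      - 2 * (\<Sum>y\<in>W. \<Sum>z\<in>W. \<mu> y z * (f y * f z))"
    by (simp add: sum.distrib[symmetric] sum_subtractf[symmetric] sum_distrib_left
        power2_eq_square algebra_simps)
  moreover have "(\<Sum>y\<in>W. \<Sum>z\<in>W. \<mu> y z * (f y + f z)\<^sup>2) =
     (\<Sum>y\<in>W. \<Sum>z\<in>W. \<mu> y z * (f y * f y)) + (\<Sum>y\<in>W. \<Sum>z\<in>W. \<mu> y z * (f z * f z))
      + 2 * (\<Sum>y\<in>W. \<Sum>z\<in>W. \<mu> y z * (f y * f z))"
    by (simp add: sum.distrib[symmetric] sum_distrib_left power2_eq_square algebra_simps)
  ultimately show "(\<Sum>y\<in>W. \<Sum>z\<in>W. \<mu> y z * (f y - f z)\<^sup>2) = 2 * (l2_sum f W - cross_sum f W)"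
    and "(\<Sum>y\<in>W. \<Sum>z\<in>W. \<mu> y z * (f y + f z)\<^sup>2) = 2 * (l2_sum f W + cross_sum f W)"
    by simp_all
qed

lemma edge_outside_support:
  assumes "supported_with_nbrs f W" "0 < \<mu> x y" "x \<notin> W \<or> y \<notin> W"
  shows "f x = 0" "f y = 0"
proof -
  have "0 < \<mu> y x"
    using assms(2) mu_sym[of x y] by simp
  then show "f x = 0" "f y = 0"
    using assms unfolding supported_with_nbrs_def by auto
qed

lemma energy_eq_dirichlet_sum:
  assumes W: "finite W" and f: "supported_with_nbrs f W"
  shows "energy \<mu> f = ennreal (dirichlet_sum f W)"
proof -
  let ?g = "\<lambda>(x, y). ennreal (\<mu> x y * (f x - f y)\<^sup>2)"
  have "(\<Sum>\<^sub>\<infinity>p\<in>UNIV. ?g p) = (\<Sum>\<^sub>\<infinity>p\<in>W \<times> W. ?g p)"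
  proof (rule infsum_cong_neutral)
    fix p assume "p \<in> UNIV - W \<times> W"
    moreover obtain x y where "p = (x, y)"
      by (cases p)
    ultimately show "?g p = 0"
      using edge_outside_support[OF f] mu_eq_0_if_not_nbr[of y x] by (cases "0 < \<mu> x y") auto
  qed auto
  also have "\<dots> = ennreal (\<Sum>(x, y)\<in>W \<times> W. \<mu> x y * (f x - f y)\<^sup>2)"
    using W by (subst sum_ennreal[symmetric]) (auto simp: mu_nonneg intro!: sum.cong)
  also have "\<dots> = ennreal (dirichlet_sum f W) * 2"
  proof -
    have "(\<Sum>(x, y)\<in>W \<times> W. \<mu> x y * (f x - f y)\<^sup>2) = dirichlet_sum f W * 2"
      by (simp add: dirichlet_sum_def sum.cartesian_product)
    then show ?thesis
      using dirichlet_sum_nonneg[of f W] by (simp add: ennreal_mult)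
  qed
  finally show ?thesis
    unfolding energy_def using mult_divide_eq_ennreal[of 2 "ennreal (dirichlet_sum f W)"] by simp
qed

text \<open>If the energy vanishes, f is constant along edges, hence on the connected set V.\<close>
lemma sq_diff_le_resistance_dirichlet_sum:
  assumes W: "finite W" and f: "supported_with_nbrs f W"
    and yz: "y \<in> V" "z \<in> V" and R: "resistance \<mu> y z \<le> ereal B"
  shows "(f y - f z)\<^sup>2 \<le> B * dirichlet_sum f W"
proof (cases "dirichlet_sum f W = 0")
  case False
  then have pos: "0 < dirichlet_sum f W"
    using dirichlet_sum_nonneg[of f W] by linarith
  have en: "energy \<mu> f = ennreal (dirichlet_sum f W)"
    by (rule energy_eq_dirichlet_sum[OF W f])
  have "ereal ((f y - f z)\<^sup>2 / enn2real (energy \<mu> f)) \<le> resistance \<mu> y z"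
    unfolding resistance_def using en pos by (intro Sup_upper CollectI exI[of _ f]) auto
  then have "ereal ((f y - f z)\<^sup>2 / enn2real (energy \<mu> f)) \<le> ereal B"
    using R by (rule order_trans)
  then have "(f y - f z)\<^sup>2 / dirichlet_sum f W \<le> B"
    using en pos by simp
  then show ?thesis
    using pos by (simp add: pos_divide_le_eq mult.commute)
next
  case True
  have edge: "f p = f q" if "0 < \<mu> p q" for p q
  proof (cases "p \<in> W \<and> q \<in> W")
    case True
    have "(\<Sum>x\<in>W. \<Sum>y\<in>W. \<mu> x y * (f x - f y)\<^sup>2) = 0"
      using \<open>dirichlet_sum f W = 0\<close> unfolding dirichlet_sum_def by simp
    then have "\<mu> p q * (f p - f q)\<^sup>2 = 0"
      using W True by (simp add: sum_nonneg_eq_0_iff sum_nonneg mu_nonneg)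
    then show ?thesis
      using that by simp
  qed (use edge_outside_support[OF f that] in auto)
  have "(y, z) \<in> (adj \<mu>)\<^sup>*"
    using connected yz by blast
  then have "f y = f z"
    by (induction rule: rtrancl_induct) (auto simp: in_adj_iff edge)
  then show ?thesis
    using True by simp
qed

end

section \<open>Return probabilities of the walk from a root\<close>

locale rooted_graph_walk = graph_walk +
  fixes x0 :: 'a
  assumes root_in_V: "x0 \<in> V"
begin

abbreviation h :: "nat \<Rightarrow> 'a \<Rightarrow> real" where "h k y \<equiv> hk \<mu> k x0 y"
abbreviation hdiag :: "nat \<Rightarrow> real" where "hdiag k \<equiv> hk \<mu> k x0 x0"

definition reach_upto :: "nat \<Rightarrow> 'a set" where
  "reach_upto K = (\<Union>k\<le>Suc K. reach k x0)"

lemma finite_reach_upto: "finite (reach_upto K)"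
  unfolding reach_upto_def using finite_reach by auto

lemma reach_subset_reach_upto: "k \<le> Suc K \<Longrightarrow> reach k x0 \<subseteq> reach_upto K"
  unfolding reach_upto_def by auto

lemma nbrs_subset_reach_upto: "k \<le> K \<Longrightarrow> y \<in> reach k x0 \<Longrightarrow> nbrs y \<subseteq> reach_upto K"
  unfolding reach_upto_def using reach_Suc_of_nbr by fastforce

lemma supported_with_nbrs_lincomb:
  assumes "i \<le> K" "j \<le> K"
  shows "supported_with_nbrs (\<lambda>y. A * h i y + B * h j y) (reach_upto K)"
  unfolding supported_with_nbrs_def
proof (intro allI impI)
  fix y assume "A * h i y + B * h j y \<noteq> 0"
  then have "y \<in> reach i x0 \<or> y \<in> reach j x0"
    using hk_eq_0_outside_reach by fastforce
  then show "y \<in> reach_upto K \<and> nbrs y \<subseteq> reach_upto K"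
    using assms reach_subset_reach_upto nbrs_subset_reach_upto by (meson le_SucI subsetD)
qed

lemma sum_hk_mult_hk:
  assumes "finite W" "reach i x0 \<subseteq> W"
  shows "(\<Sum>y\<in>W. h i y * h j y * \<pi> y) = hdiag (i + j)"
proof -
  have "(\<Sum>y\<in>W. h i y * h j y * \<pi> y)
      = (\<Sum>y\<in>W. walk_prob \<mu> i x0 y * walk_prob \<mu> j y x0) / \<pi> x0"
    unfolding sum_divide_distrib
  proof (intro sum.cong refl)
    fix y
    have "h i y * h j y * \<pi> y = walk_prob \<mu> i x0 y * hk \<mu> j y x0"
      using hk_mult_muv[OF root_in_V, of i y] hk_sym[of j x0 y] by (simp add: algebra_simps)
    then show "h i y * h j y * \<pi> y = walk_prob \<mu> i x0 y * walk_prob \<mu> j y x0 / \<pi> x0"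
      by (simp add: hk_def)
  qed
  also have "\<dots> = hdiag (i + j)"
    using walk_prob_add[OF assms, of j x0] by (simp add: hk_def)
  finally show ?thesis .
qed

lemma sum_mu_mult_hk:
  assumes "finite W" "reach j x0 \<subseteq> W"
  shows "(\<Sum>z\<in>W. \<mu> y z * h j z) = \<pi> y * h (Suc j) y"
proof (cases "y \<in> V")
  case True
  define U where "U = W \<union> nbrs y"
  have U: "finite U" "nbrs y \<subseteq> U" "W \<subseteq> U"
    using assms finite_nbrs U_def by auto
  have "(\<Sum>z\<in>W. \<mu> y z * h j z) = (\<Sum>z\<in>U. \<mu> y z * h j z)"
    using assms U hk_eq_0_outside_reach[of _ j x0] by (intro sum.mono_neutral_left) auto
  also have "\<dots> = \<pi> y / \<pi> x0 * (\<Sum>z\<in>U. Ptr \<mu> y z * walk_prob \<mu> j z x0)"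
    unfolding sum_distrib_left
  proof (intro sum.cong refl)
    fix z
    have "h j z = hk \<mu> j z x0"
      by (rule hk_sym)
    then have "h j z = walk_prob \<mu> j z x0 / \<pi> x0"
      by (simp add: hk_def)
    then show "\<mu> y z * h j z = \<pi> y / \<pi> x0 * (Ptr \<mu> y z * walk_prob \<mu> j z x0)"
      using muv_pos[OF True] by (simp add: Ptr_def)
  qed
  also have "\<dots> = \<pi> y * h (Suc j) y"
    using walk_prob_Suc_sum[OF U(1,2), of j x0] hk_sym[of "Suc j" x0 y] by (simp add: hk_def)
  finally show ?thesis .
qed (simp add: muv_outside_V mu_eq_0_outside_V)

lemma cross_sum_hk:
  assumes "finite W" "reach i x0 \<subseteq> W" "reach j x0 \<subseteq> W"
  shows "(\<Sum>y\<in>W. \<Sum>z\<in>W. h i y * \<mu> y z * h j z) = hdiag (i + j + 1)"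
proof -
  have "(\<Sum>y\<in>W. \<Sum>z\<in>W. h i y * \<mu> y z * h j z) = (\<Sum>y\<in>W. h i y * h (Suc j) y * \<pi> y)"
  proof (intro sum.cong refl)
    fix y
    have "(\<Sum>z\<in>W. h i y * \<mu> y z * h j z) = h i y * (\<Sum>z\<in>W. \<mu> y z * h j z)"
      by (simp add: sum_distrib_left mult.assoc)
    then show "(\<Sum>z\<in>W. h i y * \<mu> y z * h j z) = h i y * h (Suc j) y * \<pi> y"
      using sum_mu_mult_hk[OF assms(1,3), of y] by simp
  qed
  then show ?thesis
    using sum_hk_mult_hk[OF assms(1,2)] by simp
qed

lemma
  fixes A B :: real
  assumes "finite W" "reach i x0 \<subseteq> W" "reach j x0 \<subseteq> W"
  shows l2_sum_lincomb: "l2_sum (\<lambda>y. A * h i y + B * h j y) W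
           = A * A * hdiag (2 * i) + 2 * A * B * hdiag (i + j) + B * B * hdiag (2 * j)"
    and cross_sum_lincomb: "cross_sum (\<lambda>y. A * h i y + B * h j y) W
           = A * A * hdiag (2 * i + 1) + 2 * A * B * hdiag (i + j + 1) + B * B * hdiag (2 * j + 1)"
proof -
  have idx: "2 * i = i + i" "2 * j = j + j" "j + i = i + j"
    by simp_all
  have "l2_sum (\<lambda>y. A * h i y + B * h j y) W
      = (\<Sum>y\<in>W. A * A * (h i y * h i y * \<pi> y) + A * B * (h i y * h j y * \<pi> y)
          + A * B * (h j y * h i y * \<pi> y) + B * B * (h j y * h j y * \<pi> y))"
    unfolding l2_sum_def by (intro sum.cong refl) (simp add: algebra_simps)
  also have "\<dots> = A * A * (\<Sum>y\<in>W. h i y * h i y * \<pi> y) + A * B * (\<Sum>y\<in>W. h i y * h j y * \<pi> y)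
        + A * B * (\<Sum>y\<in>W. h j y * h i y * \<pi> y) + B * B * (\<Sum>y\<in>W. h j y * h j y * \<pi> y)"
    by (simp only: sum.distrib sum_distrib_left)
  also have "\<dots> = A * A * hdiag (i + i) + A * B * hdiag (i + j) + A * B * hdiag (j + i)
        + B * B * hdiag (j + j)"
    using sum_hk_mult_hk[OF assms(1,2)] sum_hk_mult_hk[OF assms(1,3)] by simp
  finally show "l2_sum (\<lambda>y. A * h i y + B * h j y) W
           = A * A * hdiag (2 * i) + 2 * A * B * hdiag (i + j) + B * B * hdiag (2 * j)"
    unfolding idx by simp
  have "cross_sum (\<lambda>y. A * h i y + B * h j y) W
      = (\<Sum>y\<in>W. (\<Sum>z\<in>W. A * A * (h i y * \<mu> y z * h i z)) + (\<Sum>z\<in>W. A * B * (h i y * \<mu> y z * h j z))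
          + (\<Sum>z\<in>W. A * B * (h j y * \<mu> y z * h i z)) + (\<Sum>z\<in>W. B * B * (h j y * \<mu> y z * h j z)))"
    unfolding cross_sum_def sum.distrib[symmetric] by (intro sum.cong refl) (simp add: algebra_simps)
  also have "\<dots> = A * A * (\<Sum>y\<in>W. \<Sum>z\<in>W. h i y * \<mu> y z * h i z)
        + A * B * (\<Sum>y\<in>W. \<Sum>z\<in>W. h i y * \<mu> y z * h j z)
        + A * B * (\<Sum>y\<in>W. \<Sum>z\<in>W. h j y * \<mu> y z * h i z)
        + B * B * (\<Sum>y\<in>W. \<Sum>z\<in>W. h j y * \<mu> y z * h j z)"
    by (simp only: sum.distrib sum_distrib_left)
  also have "\<dots> = A * A * hdiag (i + i + 1) + A * B * hdiag (i + j + 1) + A * B * hdiag (j + i + 1)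
        + B * B * hdiag (j + j + 1)"
    using cross_sum_hk[OF assms(1,2,2)] cross_sum_hk[OF assms(1,2,3)]
      cross_sum_hk[OF assms(1,3,2)] cross_sum_hk[OF assms(1,3,3)] by simp
  finally show "cross_sum (\<lambda>y. A * h i y + B * h j y) W
           = A * A * hdiag (2 * i + 1) + 2 * A * B * hdiag (i + j + 1) + B * B * hdiag (2 * j + 1)"
    unfolding idx by simp
qed

text \<open>Pairing consecutive times removes the periodicity of the walk: the drops of
  \<open>hdiag_pair\<close> are the energies of \<open>h j + h (j + 1) = 2 q\<^sub>j(x0, \<cdot>)\<close>, and they decrease.\<close>
definition hdiag_pair :: "nat \<Rightarrow> real" where
  "hdiag_pair j = hdiag (2 * j) + hdiag (2 * j + 1)"

definition hdiag_pair_drop :: "nat \<Rightarrow> real" where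
  "hdiag_pair_drop j = hdiag_pair j - hdiag_pair (Suc j)"

lemma hdiag_pair_nonneg: "0 \<le> hdiag_pair j"
  unfolding hdiag_pair_def using hk_nonneg by (simp add: add_nonneg_nonneg)

lemma hdiag_pair_drop_eq_dirichlet_sum:
  "hdiag_pair_drop j = dirichlet_sum (\<lambda>y. h j y + h (Suc j) y) (reach_upto (Suc j))"
proof -
  let ?W = "reach_upto (Suc j)"
  have W: "finite ?W" "reach j x0 \<subseteq> ?W" "reach (Suc j) x0 \<subseteq> ?W"
    using finite_reach_upto reach_subset_reach_upto by auto
  have "dirichlet_sum (\<lambda>y. 1 * h j y + 1 * h (Suc j) y) ?W
      = l2_sum (\<lambda>y. 1 * h j y + 1 * h (Suc j) y) ?W - cross_sum (\<lambda>y. 1 * h j y + 1 * h (Suc j) y) ?W"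
    using double_sum_diff_sq[OF W(1) supported_with_nbrs_lincomb[of j "Suc j" "Suc j" 1 1]]
    unfolding dirichlet_sum_def by simp
  also have "\<dots> = hdiag_pair_drop j"
    unfolding l2_sum_lincomb[OF W] cross_sum_lincomb[OF W] hdiag_pair_drop_def hdiag_pair_def
    by (simp add: algebra_simps mult_2_right)
  finally show ?thesis
    by simp
qed

lemma hdiag_pair_drop_nonneg: "0 \<le> hdiag_pair_drop j"
  using hdiag_pair_drop_eq_dirichlet_sum dirichlet_sum_nonneg by simp

lemma hdiag_pair_drop_Suc_le: "hdiag_pair_drop (Suc j) \<le> hdiag_pair_drop j"
proof -
  let ?W = "reach_upto (Suc (Suc j))"
  let ?f = "\<lambda>y. 1 * h j y + (-1) * h (Suc (Suc j)) y"
  have W: "finite ?W" "reach j x0 \<subseteq> ?W" "reach (Suc (Suc j)) x0 \<subseteq> ?W"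
    using finite_reach_upto reach_subset_reach_upto by auto
  have "0 \<le> (\<Sum>y\<in>?W. \<Sum>z\<in>?W. \<mu> y z * (?f y + ?f z)\<^sup>2)"
    by (auto intro!: sum_nonneg mult_nonneg_nonneg simp: mu_nonneg)
  also have "\<dots> = 2 * (l2_sum ?f ?W + cross_sum ?f ?W)"
    using double_sum_add_sq[OF W(1) supported_with_nbrs_lincomb[of j "Suc (Suc j)" "Suc (Suc j)" 1 "-1"]] by simp
  also have "\<dots> = 2 * (hdiag_pair_drop j - hdiag_pair_drop (Suc j))"
    unfolding l2_sum_lincomb[OF W] cross_sum_lincomb[OF W] hdiag_pair_drop_def hdiag_pair_def
    by (simp add: algebra_simps mult_2_right)
  finally show ?thesis
    by simp
qed

lemma hdiag_pair_drop_antimono: "n \<le> m \<Longrightarrow> hdiag_pair_drop m \<le> hdiag_pair_drop n"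
  using hdiag_pair_drop_Suc_le by (rule lift_Suc_antimono_le)

lemma hdiag_pair_drop_telescope: "real n * hdiag_pair_drop (k + n) \<le> hdiag_pair k - hdiag_pair (k + n)"
proof (induction n)
  case (Suc n)
  have "real (Suc n) * hdiag_pair_drop (k + Suc n) \<le> real n * hdiag_pair_drop (k + n) + hdiag_pair_drop (k + n)"
    using hdiag_pair_drop_Suc_le[of "k + n"] mult_left_mono[OF hdiag_pair_drop_Suc_le[of "k + n"], of "real n"]
    by (simp add: algebra_simps)
  also have "\<dots> \<le> hdiag_pair k - hdiag_pair (k + Suc n)"
    using Suc.IH unfolding hdiag_pair_drop_def by simp
  finally show ?case .
qed simp

lemma hdiag_pair_drop_double_le:
  assumes "1 \<le> k" shows "hdiag_pair_drop (2 * k) \<le> hdiag_pair k / k"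
proof -
  have "real k * hdiag_pair_drop (2 * k) \<le> hdiag_pair k"
    using hdiag_pair_drop_telescope[of k k] hdiag_pair_nonneg[of "k + k"] by (simp add: mult_2)
  then show ?thesis
    using assms by (simp add: pos_le_divide_eq mult.commute)
qed

lemma sq_diff_hk_pair_le_resistance:
  assumes "y \<in> V" "z \<in> V" "resistance \<mu> y z \<le> ereal B"
  shows "(h j y + h (Suc j) y - (h j z + h (Suc j) z))\<^sup>2 \<le> B * hdiag_pair_drop j"
  using sq_diff_le_resistance_dirichlet_sum[OF finite_reach_upto
      supported_with_nbrs_lincomb[of j "Suc j" "Suc j" 1 1] assms]
  by (simp add: hdiag_pair_drop_eq_dirichlet_sum)

lemma sum_hk_mult_muv_reach_upto:
  assumes "m \<le> Suc K" shows "(\<Sum>y\<in>reach_upto K. h m y * \<pi> y) = 1"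
  using sum_walk_prob[OF root_in_V finite_reach_upto reach_subset_reach_upto[OF assms]]
  by (simp add: hk_mult_muv[OF root_in_V])

lemma sum_hk_pair_mult_muv_le:
  assumes "finite S" shows "(\<Sum>y\<in>S. (h j y + h (Suc j) y) * \<pi> y) \<le> 2"
proof -
  let ?F = "\<lambda>y. (h j y + h (Suc j) y) * \<pi> y"
  let ?W = "reach_upto (Suc j)"
  have "(\<Sum>y\<in>S. ?F y) \<le> (\<Sum>y\<in>S \<union> ?W. ?F y)"
    using assms finite_reach_upto hk_nonneg muv_nonneg
    by (intro sum_mono2) (auto intro!: mult_nonneg_nonneg add_nonneg_nonneg)
  also have "\<dots> = (\<Sum>y\<in>?W. ?F y)"
  proof (rule sum.mono_neutral_right)
    show "\<forall>y\<in>S \<union> ?W - ?W. ?F y = 0"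
    proof
      fix y assume "y \<in> S \<union> ?W - ?W"
      then have "y \<notin> reach j x0" "y \<notin> reach (Suc j) x0"
        using reach_subset_reach_upto[of j "Suc j"] reach_subset_reach_upto[of "Suc j" "Suc j"]
        by auto
      then show "?F y = 0"
        by (simp add: hk_eq_0_outside_reach)
    qed
  qed (use assms finite_reach_upto in auto)
  also have "\<dots> = 2"
    using sum_hk_mult_muv_reach_upto[of j "Suc j"] sum_hk_mult_muv_reach_upto[of "Suc j" "Suc j"]
    by (simp add: sum.distrib distrib_right)
  finally show ?thesis .
qed

text \<open>The walk started at \<open>x0\<close> cannot stay large on a set \<open>S\<close> of big mass, while the
  resistance estimate prevents it from dropping much between \<open>x0\<close> and \<open>S\<close>.\<close>
lemma hdiag_pair_le:
  assumes R: "\<forall>u\<in>V. \<forall>v\<in>V. resistance \<mu> u v \<le> ereal (c1 * real (gdist \<mu> u v) powr \<kappa>)"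
    and c1: "0 \<le> c1" and \<kappa>: "0 \<le> \<kappa>"
    and S: "finite S" "S \<subseteq> V" "\<forall>y\<in>S. real (gdist \<mu> x0 y) \<le> r"
    and mass: "0 < (\<Sum>y\<in>S. \<pi> y)" and k: "1 \<le> k"
  shows "hdiag_pair k \<le> 4 / (\<Sum>y\<in>S. \<pi> y) + 4 * c1 * r powr \<kappa> / k"
proof -
  define F where "F y = h (2 * k) y + h (Suc (2 * k)) y" for y
  define Q where "Q = 4 * c1 * r powr \<kappa> / k"
  have Q: "0 \<le> Q"
    using c1 by (simp add: Q_def)
  have near: "hdiag_pair k \<le> F y + sqrt (Q * hdiag_pair k / 4)" if "y \<in> S" for y
  proof -
    have "real (gdist \<mu> x0 y) powr \<kappa> \<le> r powr \<kappa>"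
      using S that \<kappa> by (intro powr_mono2) auto
    then have "c1 * real (gdist \<mu> x0 y) powr \<kappa> * hdiag_pair_drop (2 * k)
        \<le> c1 * r powr \<kappa> * (hdiag_pair k / k)"
      using c1 hdiag_pair_drop_nonneg hdiag_pair_drop_double_le[OF k]
      by (intro mult_mono mult_left_mono) auto
    moreover have "(F x0 - F y)\<^sup>2 \<le> c1 * real (gdist \<mu> x0 y) powr \<kappa> * hdiag_pair_drop (2 * k)"
      unfolding F_def using S that R root_in_V by (intro sq_diff_hk_pair_le_resistance) auto
    ultimately have "F x0 - F y \<le> sqrt (Q * hdiag_pair k / 4)"
      unfolding Q_def by (intro real_le_rsqrt) simp
    then show ?thesis
      by (simp add: F_def hdiag_pair_def)
  qed
  have "hdiag_pair k * (\<Sum>y\<in>S. \<pi> y) \<le> (\<Sum>y\<in>S. (F y + sqrt (Q * hdiag_pair k / 4)) * \<pi> y)"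
    unfolding sum_distrib_left using near muv_nonneg
    by (intro sum_mono mult_right_mono) auto
  also have "\<dots> \<le> 2 + sqrt (Q * hdiag_pair k / 4) * (\<Sum>y\<in>S. \<pi> y)"
    using sum_hk_pair_mult_muv_le[OF S(1), of "2 * k"]
    by (simp add: F_def distrib_right sum.distrib sum_distrib_left)
  finally have "hdiag_pair k \<le> 2 / (\<Sum>y\<in>S. \<pi> y) + sqrt (Q * hdiag_pair k / 4)"
    using mass by (simp add: field_simps)
  then show ?thesis
    using le_of_le_div_add_sqrt[OF hdiag_pair_nonneg mass Q] by (simp add: Q_def)
qed

lemma qhk_diff_sq_le:
  assumes R: "\<forall>u\<in>V. \<forall>v\<in>V. resistance \<mu> u v \<le> ereal (c1 * real (gdist \<mu> u v) powr \<kappa>)"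
    and c1: "0 \<le> c1" and \<kappa>: "0 \<le> \<kappa>"
    and S: "finite S" "S \<subseteq> V" "\<forall>y\<in>S. real (gdist \<mu> x0 y) \<le> r"
    and mass: "0 < (\<Sum>y\<in>S. \<pi> y)" and m: "2 \<le> m" and yz: "y \<in> V" "z \<in> V"
  shows "(qhk \<mu> m x0 y - qhk \<mu> m x0 z)\<^sup>2 \<le> c1 * real (gdist \<mu> y z) powr \<kappa> *
           (1 / (real (m div 2) * (\<Sum>y\<in>S. \<pi> y)) + c1 * r powr \<kappa> / (real (m div 2))\<^sup>2)"
proof -
  define k where "k = m div 2"
  define G where "G = c1 * real (gdist \<mu> y z) powr \<kappa>"
  have k: "1 \<le> k" "2 * k \<le> m"
    using m unfolding k_def by auto
  have G: "0 \<le> G"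
    unfolding G_def using c1 by simp
  have "hdiag_pair_drop m \<le> hdiag_pair k / k"
    using hdiag_pair_drop_antimono[OF k(2)] hdiag_pair_drop_double_le[OF k(1)] by simp
  also have "\<dots> \<le> (4 / (\<Sum>y\<in>S. \<pi> y) + 4 * c1 * r powr \<kappa> / k) / k"
    using hdiag_pair_le[OF R c1 \<kappa> S mass k(1)] by (simp add: divide_right_mono)
  finally have "G * hdiag_pair_drop m \<le> G * ((4 / (\<Sum>y\<in>S. \<pi> y) + 4 * c1 * r powr \<kappa> / k) / k)"
    using G by (rule mult_left_mono)
  then have drop: "G * hdiag_pair_drop m / 4 \<le> G * ((4 / (\<Sum>y\<in>S. \<pi> y) + 4 * c1 * r powr \<kappa> / k) / k) / 4"
    by simp
  have "(qhk \<mu> m x0 y - qhk \<mu> m x0 z)\<^sup>2 = (h m y + h (Suc m) y - (h m z + h (Suc m) z))\<^sup>2 / 4"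
    unfolding qhk_def by (simp add: power2_eq_square field_simps)
  also have "\<dots> \<le> G * hdiag_pair_drop m / 4"
    using sq_diff_hk_pair_le_resistance[OF yz] R yz unfolding G_def by simp
  also have "\<dots> \<le> G * (1 / (real k * (\<Sum>y\<in>S. \<pi> y)) + c1 * r powr \<kappa> / (real k)\<^sup>2)"
    using drop k mass by (simp add: field_simps power2_eq_square)
  finally show ?thesis
    unfolding G_def k_def .
qed

end

section \<open>Rescaling along the graph sequence\<close>

lemma inverse_plus_le_of_lower_bounds:
  fixes k K PS P R M c :: real
  assumes "0 < K" "K \<le> k" "0 < P" "P \<le> PS" "0 \<le> R" "R \<le> M" "0 \<le> c"
  shows "1 / (k * PS) + c * R / k\<^sup>2 \<le> 1 / (K * P) + c * M / K\<^sup>2"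
proof (rule add_mono)
  show "1 / (k * PS) \<le> 1 / (K * P)"
    using assms by (intro divide_left_mono mult_mono mult_pos_pos) auto
  have "R / k\<^sup>2 \<le> M / K\<^sup>2"
    using assms by (intro frac_le power_mono) auto
  then show "c * R / k\<^sup>2 \<le> c * M / K\<^sup>2"
    using assms(7) by (simp add: mult_left_mono times_divide_eq_right[symmetric] del: times_divide_eq_right)
qed

lemma rescaled_bound_arith:
  fixes D2 G R k PS \<beta> A d L \<gamma> a \<epsilon> c1 c3 :: real
  assumes D2: "D2 \<le> c1 * G * (1 / (k * PS) + c1 * R / k\<^sup>2)"
    and G: "0 \<le> G" "G \<le> A * d" and R: "0 \<le> R" "R \<le> A * L"
    and k: "\<gamma> * a / 4 \<le> k" and PS: "\<epsilon> * \<beta> < PS" and scaling: "A * \<beta> \<le> c3 * \<gamma>"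
    and pos: "0 < \<beta>" "0 < A" "0 < c1" "0 < c3" "0 < \<epsilon>" "0 < a" "0 < \<gamma>" "0 \<le> d" "0 \<le> L"
  shows "\<beta>\<^sup>2 * D2 \<le> c1 * d * (4 * c3 / (a * \<epsilon>) + 16 * c1 * L * c3\<^sup>2 / a\<^sup>2)"
proof -
  define u where "u = A * \<beta> / \<gamma>"
  have u: "0 \<le> u" "u \<le> c3"
    using scaling pos unfolding u_def by (auto simp: pos_divide_le_eq)
  have "0 < \<gamma> * a / 4" "0 < \<epsilon> * \<beta>"
    using pos by simp_all
  then have "0 < k" "0 < PS"
    using k PS by linarith+
  then have "0 \<le> 1 / (k * PS) + c1 * R / k\<^sup>2"
    using R pos by simp
  then have "D2 \<le> c1 * (A * d) * (1 / (\<gamma> * a / 4 * (\<epsilon> * \<beta>)) + c1 * (A * L) / (\<gamma> * a / 4)\<^sup>2)"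
    using G R pos k PS
    by (intro order.trans[OF D2] mult_mono mult_left_mono inverse_plus_le_of_lower_bounds) auto
  then have "\<beta>\<^sup>2 * D2
      \<le> \<beta>\<^sup>2 * (c1 * (A * d) * (1 / (\<gamma> * a / 4 * (\<epsilon> * \<beta>)) + c1 * (A * L) / (\<gamma> * a / 4)\<^sup>2))"
    by (simp add: mult_left_mono)
  also have "\<dots> = c1 * d * (4 * u / (a * \<epsilon>) + 16 * c1 * L * u\<^sup>2 / a\<^sup>2)"
    using pos unfolding u_def by (simp add: field_simps power2_eq_square)
  also have "\<dots> \<le> c1 * d * (4 * c3 / (a * \<epsilon>) + 16 * c1 * L * c3\<^sup>2 / a\<^sup>2)"
    using u pos by (intro mult_left_mono add_mono divide_right_mono power_mono) auto
  finally show ?thesis .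
qed

lemma scaled_qhk_diff_le:
  fixes \<alpha> \<beta> \<gamma> c1 c3 \<kappa> \<epsilon> C a t r \<delta> :: real
  assumes graph: "weighted_graph V \<mu>" "\<rho> \<in> V"
    and R: "\<forall>u\<in>V. \<forall>v\<in>V. resistance \<mu> u v \<le> ereal (c1 * real (gdist \<mu> u v) powr \<kappa>)"
    and pos: "0 < c1" "0 < c3" "0 < \<kappa>" "0 < \<alpha>" "0 < \<beta>" "0 < \<epsilon>" "0 \<le> C" "0 < r" "0 < \<delta>"
    and scaling: "\<alpha> powr \<kappa> * \<beta> \<le> c3 * \<gamma>"
    and S: "finite S" "S \<subseteq> V" "\<forall>s\<in>S. real (gdist \<mu> \<rho> s) \<le> \<alpha> * C" "\<epsilon> * \<beta> < (\<Sum>y\<in>S. muv \<mu> y)"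
    and t: "0 < a" "a \<le> t" "4 \<le> \<gamma> * a"
    and x: "x \<in> gball V \<mu> \<rho> (\<alpha> * r)" and yz: "y \<in> V" "z \<in> V" "real (gdist \<mu> y z) \<le> \<alpha> * \<delta>"
  shows "\<beta> * \<bar>qhk \<mu> (nat \<lfloor>\<gamma> * t\<rfloor>) x y - qhk \<mu> (nat \<lfloor>\<gamma> * t\<rfloor>) x z\<bar>
     \<le> sqrt (\<delta> powr \<kappa> * (c1 * (4 * c3 / (a * \<epsilon>) + 16 * c1 * (r + C) powr \<kappa> * c3\<^sup>2 / a\<^sup>2)))"
proof -
  have xV: "x \<in> V" and x\<rho>: "real (gdist \<mu> \<rho> x) < \<alpha> * r"
    using x unfolding gball_def by auto
  interpret rooted_graph_walk V \<mu> x
    using graph xV by unfold_locales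
  define m where "m = nat \<lfloor>\<gamma> * t\<rfloor>"
  have \<gamma>: "0 < \<gamma>"
    using t by (smt (verit) mult_nonpos_nonneg)
  then have "\<gamma> * a \<le> \<gamma> * t"
    using t by simp
  then have m: "2 \<le> m" "\<gamma> * a / 4 \<le> real (m div 2)"
    unfolding m_def using t by linarith+
  have S_near_x: "\<forall>s\<in>S. real (gdist \<mu> x s) \<le> \<alpha> * (r + C)"
  proof
    fix s assume s: "s \<in> S"
    then have "real (gdist \<mu> x s) \<le> real (gdist \<mu> \<rho> x) + real (gdist \<mu> \<rho> s)"
      using S gdist_triangle[OF xV graph(2), of s] gdist_sym[OF xV graph(2)] by auto
    then show "real (gdist \<mu> x s) \<le> \<alpha> * (r + C)"
      using x\<rho> S(3) s by (fastforce simp: algebra_simps)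
  qed
  have mass: "0 < (\<Sum>y\<in>S. \<pi> y)"
    using S(4) mult_pos_pos[OF pos(6,5)] by linarith
  have "(\<alpha> * (r + C)) powr \<kappa> = \<alpha> powr \<kappa> * (r + C) powr \<kappa>"
    and "real (gdist \<mu> y z) powr \<kappa> \<le> \<alpha> powr \<kappa> * \<delta> powr \<kappa>"
    using pos yz by (simp_all add: powr_mult[symmetric] powr_mono2)
  moreover have "(qhk \<mu> m x y - qhk \<mu> m x z)\<^sup>2 \<le> c1 * real (gdist \<mu> y z) powr \<kappa> *
      (1 / (real (m div 2) * (\<Sum>y\<in>S. \<pi> y)) + c1 * (\<alpha> * (r + C)) powr \<kappa> / (real (m div 2))\<^sup>2)"
    using pos by (intro qhk_diff_sq_le[OF R _ _ S(1,2) S_near_x mass m(1) yz(1,2)]) auto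
  ultimately have "\<beta>\<^sup>2 * (qhk \<mu> m x y - qhk \<mu> m x z)\<^sup>2
      \<le> c1 * \<delta> powr \<kappa> * (4 * c3 / (a * \<epsilon>) + 16 * c1 * (r + C) powr \<kappa> * c3\<^sup>2 / a\<^sup>2)"
    using pos \<gamma> S(4) t m(2) scaling
    by (intro rescaled_bound_arith[where G = "real (gdist \<mu> y z) powr \<kappa>"
          and R = "(\<alpha> * (r + C)) powr \<kappa>" and A = "\<alpha> powr \<kappa>" and L = "(r + C) powr \<kappa>"
          and k = "real (m div 2)" and PS = "\<Sum>y\<in>S. \<pi> y" and d = "\<delta> powr \<kappa>"
          and \<gamma> = \<gamma>]) auto
  then show ?thesis
    unfolding m_def by (intro real_le_rsqrt) (simp add: power_mult_distrib ac_simps)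
qed

lemma eventually_Sup_scaled_qhk_diff_le:
  fixes \<alpha> \<beta> \<gamma> :: "nat \<Rightarrow> real" and c1 c3 \<kappa> \<epsilon> C a b r \<delta> :: real
  assumes large: "eventually (\<lambda>n. weighted_graph (V n) (\<mu> n) \<and> \<rho> \<in> V n \<and>
      (\<forall>u\<in>V n. \<forall>v\<in>V n. resistance (\<mu> n) u v \<le> ereal (c1 * real (gdist (\<mu> n) u v) powr \<kappa>)) \<and>
      0 < \<alpha> n \<and> 0 < \<beta> n \<and> \<alpha> n powr \<kappa> * \<beta> n \<le> c3 * \<gamma> n \<and> 4 \<le> \<gamma> n * a \<and>
      (\<exists>S. finite S \<and> S \<subseteq> V n \<and> (\<forall>s\<in>S. real (gdist (\<mu> n) \<rho> s) \<le> \<alpha> n * C) \<and>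
           \<epsilon> * \<beta> n < (\<Sum>y\<in>S. muv (\<mu> n) y))) sequentially"
    and pos: "0 < c1" "0 < c3" "0 < \<kappa>" "0 < \<epsilon>" "0 \<le> C" "0 < r" "0 < a" "a \<le> b" "0 < \<delta>"
  shows "eventually (\<lambda>n. 0 \<le> Sup {ereal (\<beta> n * \<bar>qhk (\<mu> n) (nat \<lfloor>\<gamma> n * t\<rfloor>) x y - qhk (\<mu> n) (nat \<lfloor>\<gamma> n * t\<rfloor>) x z\<bar>) | x y z t.
               x \<in> gball (V n) (\<mu> n) \<rho> (\<alpha> n * r) \<and> y \<in> gball (V n) (\<mu> n) \<rho> (\<alpha> n * r) \<and>
               z \<in> gball (V n) (\<mu> n) \<rho> (\<alpha> n * r) \<and>
               real (gdist (\<mu> n) y z) \<le> \<alpha> n * \<delta> \<and> t \<in> {a..b}} \<and>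
      Sup {ereal (\<beta> n * \<bar>qhk (\<mu> n) (nat \<lfloor>\<gamma> n * t\<rfloor>) x y - qhk (\<mu> n) (nat \<lfloor>\<gamma> n * t\<rfloor>) x z\<bar>) | x y z t.
               x \<in> gball (V n) (\<mu> n) \<rho> (\<alpha> n * r) \<and> y \<in> gball (V n) (\<mu> n) \<rho> (\<alpha> n * r) \<and>
               z \<in> gball (V n) (\<mu> n) \<rho> (\<alpha> n * r) \<and>
               real (gdist (\<mu> n) y z) \<le> \<alpha> n * \<delta> \<and> t \<in> {a..b}}
      \<le> ereal (sqrt (\<delta> powr \<kappa> * (c1 * (4 * c3 / (a * \<epsilon>) + 16 * c1 * (r + C) powr \<kappa> * c3\<^sup>2 / a\<^sup>2))))) sequentially"
  using large
proof eventually_elim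
  case (elim n)
  then obtain S where S: "finite S" "S \<subseteq> V n" "\<forall>s\<in>S. real (gdist (\<mu> n) \<rho> s) \<le> \<alpha> n * C"
    "\<epsilon> * \<beta> n < (\<Sum>y\<in>S. muv (\<mu> n) y)"
    by blast
  interpret graph_walk "V n" "\<mu> n"
    using elim by unfold_locales simp
  note bound = scaled_qhk_diff_le[of "V n" "\<mu> n" \<rho> c1 \<kappa> c3 "\<alpha> n" "\<beta> n" \<epsilon> C r \<delta> "\<gamma> n" S]
  show ?case
    using elim pos S
    by (intro conjI Sup_least Sup_upper2[where u = 0])
      (auto simp: gball_def zero_ereal_def intro!: bound exI[of _ \<rho>] exI[of _ a])
qed

lemma tendsto_sqrt_powr_at_right_0:
  fixes \<kappa> K :: real
  assumes "0 < \<kappa>"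
  shows "((\<lambda>\<delta>. sqrt (\<delta> powr \<kappa> * K)) \<longlongrightarrow> 0) (at_right 0)"
proof -
  have "eventually (\<lambda>\<delta>::real. 0 \<le> \<delta>) (at_right 0)"
    by (rule eventually_at_rightI[of 0 1]) auto
  then have "((\<lambda>\<delta>::real. \<delta> powr \<kappa>) \<longlongrightarrow> 0) (at_right 0)"
    using assms by (intro tendsto_zero_powrI[OF tendsto_ident_at tendsto_const]) auto
  then show ?thesis
    using tendsto_real_sqrt[OF tendsto_mult_left_zero[of _ _ K]] by (simp add: mult.commute)
qed

lemma limsup_tendsto_0_at_right:
  fixes S :: "real \<Rightarrow> nat \<Rightarrow> ereal" and g :: "real \<Rightarrow> real"
  assumes bound: "\<And>\<delta>. 0 < \<delta> \<Longrightarrow> eventually (\<lambda>n. 0 \<le> S \<delta> n \<and> S \<delta> n \<le> ereal (g \<delta>)) sequentially"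
    and g: "(g \<longlongrightarrow> 0) (at_right 0)"
  shows "((\<lambda>\<delta>. limsup (S \<delta>)) \<longlongrightarrow> 0) (at_right 0)"
proof (rule tendsto_sandwich[OF _ _ tendsto_const])
  have limsup_bounds: "0 \<le> limsup (S \<delta>) \<and> limsup (S \<delta>) \<le> ereal (g \<delta>)" if "0 < \<delta>" for \<delta>
    using bound[OF that] by (auto intro: Limsup_bounded le_Limsup elim: eventually_mono)
  show "eventually (\<lambda>\<delta>. 0 \<le> limsup (S \<delta>)) (at_right 0)"
    "eventually (\<lambda>\<delta>. limsup (S \<delta>) \<le> ereal (g \<delta>)) (at_right 0)"
    using limsup_bounds by (auto intro: eventually_at_rightI[of 0 1])
  show "((\<lambda>\<delta>. ereal (g \<delta>)) \<longlongrightarrow> 0) (at_right 0)"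
    using g by (simp add: zero_ereal_def lim_ereal)
qed

lemma finite_subset_sum_muv_gt:
  assumes "ennreal c < nuG V \<mu> A"
  obtains S where "finite S" "S \<subseteq> A \<inter> V" "c < (\<Sum>y\<in>S. muv \<mu> y)"
proof -
  have "nuG V \<mu> A = (SUP S\<in>{S. finite S \<and> S \<subseteq> A \<inter> V}. ennreal (\<Sum>y\<in>S. muv \<mu> y))"
    unfolding nuG_def by (subst nonneg_infsum_complete) (simp_all add: sum_ennreal muv_nonneg)
  then obtain S where S: "finite S" "S \<subseteq> A \<inter> V" "ennreal c < ennreal (\<Sum>y\<in>S. muv \<mu> y)"
    using assms by (auto simp: less_SUP_iff)
  have "c < (\<Sum>y\<in>S. muv \<mu> y)"
    using S(3) by (meson ennreal_leI not_le)
  then show ?thesis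
    using that S(1,2) by blast
qed

lemma eventually_finite_mass_gt:
  assumes lim: "((\<lambda>n. nuG (V n) (\<mu> n) A / ennreal (\<beta> n)) \<longlongrightarrow> L) sequentially" and "0 < L"
    and \<beta>: "filterlim \<beta> at_top sequentially"
  obtains \<epsilon> :: real where "0 < \<epsilon>"
    "eventually (\<lambda>n. \<exists>S. finite S \<and> S \<subseteq> A \<inter> V n \<and> \<epsilon> * \<beta> n < (\<Sum>y\<in>S. muv (\<mu> n) y)) sequentially"
proof -
  obtain e :: ennreal where e: "0 < e" "e < L"
    using dense[OF \<open>0 < L\<close>] by blast
  define \<epsilon> where "\<epsilon> = enn2real e"
  have "e < top"
    using e(2) by (simp add: less_le_trans)
  then have e_eq: "e = ennreal \<epsilon>" and \<epsilon>: "0 < \<epsilon>"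
    using e(1) unfolding \<epsilon>_def by (auto simp: enn2real_positive_iff)
  have "eventually (\<lambda>n. e < nuG (V n) (\<mu> n) A / ennreal (\<beta> n) \<and> 0 < \<beta> n) sequentially"
    using order_tendstoD(1)[OF lim e(2)] \<beta> by (auto simp: filterlim_at_top_dense intro: eventually_conj)
  then have "eventually (\<lambda>n. ennreal (\<epsilon> * \<beta> n) < nuG (V n) (\<mu> n) A) sequentially"
  proof eventually_elim
    case (elim n)
    show ?case
    proof (rule ccontr)
      assume "\<not> ennreal (\<epsilon> * \<beta> n) < nuG (V n) (\<mu> n) A"
      then have "nuG (V n) (\<mu> n) A / ennreal (\<beta> n) \<le> ennreal (\<epsilon> * \<beta> n) / ennreal (\<beta> n)"
        by (intro divide_right_mono_ennreal) simp
      also have "\<dots> = e"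
        using elim \<epsilon> e_eq by (simp add: divide_ennreal)
      finally show False
        using elim by (simp add: not_le[symmetric])
    qed
  qed
  then have "eventually (\<lambda>n. \<exists>S. finite S \<and> S \<subseteq> A \<inter> V n \<and> \<epsilon> * \<beta> n < (\<Sum>y\<in>S. muv (\<mu> n) y))
      sequentially"
    by (rule eventually_mono) (metis finite_subset_sum_muv_gt)
  then show ?thesis
    using that[OF \<epsilon>] by blast
qed

lemma eventually_gdist_le_on_ball:
  fixes \<alpha> \<alpha>' :: "nat \<Rightarrow> real"
  assumes \<alpha>': "\<alpha>' \<in> o(\<alpha>)" "\<forall>n. 0 \<le> \<alpha>' n" and \<alpha>: "filterlim \<alpha> at_top sequentially"
    and upper: "\<forall>n\<ge>n0. \<forall>x\<in>V n \<inter> ball \<rho> r. \<forall>y\<in>V n \<inter> ball \<rho> r.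
                  real (gdist (\<mu> n) x y) \<le> c' * \<alpha> n * dist x y + \<alpha>' n"
  shows "eventually (\<lambda>n. \<forall>x\<in>V n \<inter> ball \<rho> r. \<forall>y\<in>V n \<inter> ball \<rho> r.
           real (gdist (\<mu> n) x y) \<le> \<alpha> n * (2 * \<bar>c'\<bar> * r + 1)) sequentially"
proof -
  have "eventually (\<lambda>n. n0 \<le> n) sequentially"
    by (rule eventually_ge_at_top)
  moreover have "eventually (\<lambda>n. 0 \<le> \<alpha> n) sequentially"
    using \<alpha> by (simp add: filterlim_at_top)
  moreover have "eventually (\<lambda>n. norm (\<alpha>' n) \<le> 1 * norm (\<alpha> n)) sequentially"
    by (rule landau_o.smallD[OF \<alpha>'(1) zero_less_one])
  ultimately show ?thesis
  proof eventually_elim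
    case (elim n)
    show ?case
    proof (intro ballI)
      fix x y assume xy: "x \<in> V n \<inter> ball \<rho> r" "y \<in> V n \<inter> ball \<rho> r"
      then have "dist x y \<le> 2 * r"
        using dist_triangle[of x y \<rho>] by (simp add: dist_commute)
      then have "c' * \<alpha> n * dist x y \<le> \<bar>c'\<bar> * \<alpha> n * (2 * r)"
        using elim by (intro mult_mono) (auto intro: mult_right_mono)
      moreover have "\<alpha>' n \<le> \<alpha> n"
        using elim \<alpha>'(2) by simp
      moreover have "real (gdist (\<mu> n) x y) \<le> c' * \<alpha> n * dist x y + \<alpha>' n"
        using upper xy elim by blast
      ultimately show "real (gdist (\<mu> n) x y) \<le> \<alpha> n * (2 * \<bar>c'\<bar> * r + 1)"
        by (simp add: algebra_simps)
    qed
  qed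
qed

lemma eventually_mass_near_root:
  fixes \<alpha> \<beta> :: "nat \<Rightarrow> real"
  assumes root: "\<forall>n\<ge>1. \<rho> \<in> V n"
    and \<alpha>: "filterlim \<alpha> at_top sequentially" and \<beta>: "filterlim \<beta> at_top sequentially"
    and upper: "\<exists>\<alpha>'::nat \<Rightarrow> real. (\<forall>n. 0 \<le> \<alpha>' n) \<and> \<alpha>' \<in> o(\<alpha>) \<and>
                  (\<forall>r>0. \<exists>c'. \<exists>n0. \<forall>n\<ge>n0. \<forall>x\<in>V n \<inter> ball \<rho> r. \<forall>y\<in>V n \<inter> ball \<rho> r.
                      real (gdist (\<mu> n) x y) \<le> c' * \<alpha> n * dist x y + \<alpha>' n)"
    and vol: "((\<lambda>n. nuG (V n) (\<mu> n) (ball \<rho> 1) / ennreal (\<beta> n)) \<longlongrightarrow> L) sequentially" "0 < L"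
  obtains \<epsilon> C :: real where "0 < \<epsilon>" "0 \<le> C"
    "eventually (\<lambda>n. \<exists>S. finite S \<and> S \<subseteq> V n \<and> (\<forall>s\<in>S. real (gdist (\<mu> n) \<rho> s) \<le> \<alpha> n * C) \<and>
       \<epsilon> * \<beta> n < (\<Sum>y\<in>S. muv (\<mu> n) y)) sequentially"
proof -
  obtain \<alpha>' c' n1 where \<alpha>': "\<alpha>' \<in> o(\<alpha>)" "\<forall>n. 0 \<le> \<alpha>' n"
    and upper1: "\<forall>n\<ge>n1. \<forall>x\<in>V n \<inter> ball \<rho> 1. \<forall>y\<in>V n \<inter> ball \<rho> 1.
                   real (gdist (\<mu> n) x y) \<le> c' * \<alpha> n * dist x y + \<alpha>' n"
    using upper zero_less_one by metis
  obtain \<epsilon> where \<epsilon>: "0 < \<epsilon>"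
    and mass: "eventually (\<lambda>n. \<exists>S. finite S \<and> S \<subseteq> ball \<rho> 1 \<inter> V n \<and> \<epsilon> * \<beta> n < (\<Sum>y\<in>S. muv (\<mu> n) y))
                 sequentially"
    using eventually_finite_mass_gt[OF vol \<beta>] by blast
  have "eventually (\<lambda>n. \<rho> \<in> V n) sequentially"
    using root by (auto simp: eventually_sequentially)
  with mass eventually_gdist_le_on_ball[OF \<alpha>' \<alpha> upper1]
  have "eventually (\<lambda>n. \<exists>S. finite S \<and> S \<subseteq> V n \<and>
      (\<forall>s\<in>S. real (gdist (\<mu> n) \<rho> s) \<le> \<alpha> n * (2 * \<bar>c'\<bar> * 1 + 1)) \<and>
      \<epsilon> * \<beta> n < (\<Sum>y\<in>S. muv (\<mu> n) y)) sequentially"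
  proof eventually_elim
    case (elim n)
    then obtain S where "finite S" "S \<subseteq> ball \<rho> 1 \<inter> V n" "\<epsilon> * \<beta> n < (\<Sum>y\<in>S. muv (\<mu> n) y)"
      by blast
    moreover have "\<rho> \<in> V n \<inter> ball \<rho> 1"
      using elim by simp
    ultimately show ?case
      using elim(2) by blast
  qed
  moreover have "0 \<le> 2 * \<bar>c'\<bar> * 1 + 1"
    by simp
  ultimately show ?thesis
    using that[OF \<epsilon>] by blast
qed

theorem proposition5p3:
  fixes F :: "'a::metric_space set" and \<nu> :: "'a measure" and \<rho> :: 'a
    and V :: "nat \<Rightarrow> 'a set" and \<mu> :: "nat \<Rightarrow> 'a \<Rightarrow> 'a \<Rightarrow> real"
    and \<alpha> \<beta> \<gamma> :: "nat \<Rightarrow> real"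
  assumes F_compact: "\<forall>x r. r > 0 \<longrightarrow> compact (F \<inter> cball x r)"
    and rho_F: "\<rho> \<in> F"
    and nu: "radon_full_support F \<nu>"
    and graphs: "\<forall>n\<ge>1. weighted_graph (V n) (\<mu> n) \<and> \<rho> \<in> V n"
    and seq_nonneg: "\<forall>n\<ge>1. 0 \<le> \<alpha> n \<and> 0 \<le> \<beta> n \<and> 0 \<le> \<gamma> n"
    and seq_div: "filterlim \<alpha> at_top sequentially" "filterlim \<beta> at_top sequentially"
                 "filterlim \<gamma> at_top sequentially"
    and A5i_lower: "\<exists>c>0. \<forall>n\<ge>1. \<forall>x\<in>V n. \<forall>y\<in>V n.
                       real (gdist (\<mu> n) x y) \<ge> c * \<alpha> n * dist x y"
    and A5i_upper: "\<exists>\<alpha>'::nat \<Rightarrow> real. (\<forall>n. 0 \<le> \<alpha>' n) \<and> \<alpha>' \<in> o(\<alpha>) \<and>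
                      (\<forall>r>0. \<exists>c'. \<exists>n0. \<forall>n\<ge>n0. \<forall>x\<in>V n \<inter> ball \<rho> r. \<forall>y\<in>V n \<inter> ball \<rho> r.
                          real (gdist (\<mu> n) x y) \<le> c' * \<alpha> n * dist x y + \<alpha>' n)"
    and A5ii: "\<forall>x\<in>F. \<forall>r>0.
                 ((\<lambda>n. nuG (V n) (\<mu> n) (ball x r) / ennreal (\<beta> n)) \<longlongrightarrow> emeasure \<nu> (ball x r))
                   sequentially"
    and A5iii: "\<exists>\<kappa>>0. \<exists>c1>0. \<exists>c2>0. \<exists>c3>0. \<exists>n0::nat. \<forall>n\<ge>n0.
                  (\<forall>x\<in>V n. \<forall>y\<in>V n. resistance (\<mu> n) x y \<le> ereal (c1 * real (gdist (\<mu> n) x y) powr \<kappa>)) \<and>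
                  c2 * \<gamma> n \<le> \<alpha> n powr \<kappa> * \<beta> n \<and> \<alpha> n powr \<kappa> * \<beta> n \<le> c3 * \<gamma> n"
  shows "\<forall>a b r::real. 0 < a \<longrightarrow> a \<le> b \<longrightarrow> 0 < r \<longrightarrow>
    ((\<lambda>\<delta>. limsup (\<lambda>n.
        Sup {ereal (\<beta> n * \<bar>qhk (\<mu> n) (nat \<lfloor>\<gamma> n * t\<rfloor>) x y - qhk (\<mu> n) (nat \<lfloor>\<gamma> n * t\<rfloor>) x z\<bar>) | x y z t.
               x \<in> gball (V n) (\<mu> n) \<rho> (\<alpha> n * r) \<and> y \<in> gball (V n) (\<mu> n) \<rho> (\<alpha> n * r) \<and>
               z \<in> gball (V n) (\<mu> n) \<rho> (\<alpha> n * r) \<and>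
               real (gdist (\<mu> n) y z) \<le> \<alpha> n * \<delta> \<and> t \<in> {a..b}}))
      \<longlongrightarrow> 0) (at_right 0)"
proof (intro allI impI)
  fix a b r :: real
  assume ab: "0 < a" "a \<le> b" and r: "0 < r"
  obtain \<kappa> c1 c2 c3 n0 where \<kappa>: "0 < \<kappa>" and c: "0 < c1" "0 < c3"
    and A5iii_n: "\<forall>n\<ge>n0. (\<forall>x\<in>V n. \<forall>y\<in>V n. resistance (\<mu> n) x y \<le> ereal (c1 * real (gdist (\<mu> n) x y) powr \<kappa>)) \<and>
                  c2 * \<gamma> n \<le> \<alpha> n powr \<kappa> * \<beta> n \<and> \<alpha> n powr \<kappa> * \<beta> n \<le> c3 * \<gamma> n"
    using A5iii by blast
  have "0 < emeasure \<nu> (ball \<rho> 1)"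
    using nu rho_F unfolding radon_full_support_def by (meson zero_less_one)
  then obtain \<epsilon> C where \<epsilon>: "0 < \<epsilon>" and C: "0 \<le> C"
    and mass: "eventually (\<lambda>n. \<exists>S. finite S \<and> S \<subseteq> V n \<and> (\<forall>s\<in>S. real (gdist (\<mu> n) \<rho> s) \<le> \<alpha> n * C) \<and>
                 \<epsilon> * \<beta> n < (\<Sum>y\<in>S. muv (\<mu> n) y)) sequentially"
    using eventually_mass_near_root[OF _ seq_div(1,2) A5i_upper A5ii[rule_format, OF rho_F zero_less_one]]
      graphs by blast
  have "eventually (\<lambda>n. 1 \<le> n \<and> n0 \<le> n \<and> 0 < \<alpha> n \<and> 0 < \<beta> n \<and> 4 / a \<le> \<gamma> n) sequentially"
    using seq_div(1,2)[unfolded filterlim_at_top_dense] seq_div(3)[unfolded filterlim_at_top]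
    by (intro eventually_conj eventually_ge_at_top) auto
  with mass have large: "eventually (\<lambda>n. weighted_graph (V n) (\<mu> n) \<and> \<rho> \<in> V n \<and>
      (\<forall>u\<in>V n. \<forall>v\<in>V n. resistance (\<mu> n) u v \<le> ereal (c1 * real (gdist (\<mu> n) u v) powr \<kappa>)) \<and>
      0 < \<alpha> n \<and> 0 < \<beta> n \<and> \<alpha> n powr \<kappa> * \<beta> n \<le> c3 * \<gamma> n \<and> 4 \<le> \<gamma> n * a \<and>
      (\<exists>S. finite S \<and> S \<subseteq> V n \<and> (\<forall>s\<in>S. real (gdist (\<mu> n) \<rho> s) \<le> \<alpha> n * C) \<and>
           \<epsilon> * \<beta> n < (\<Sum>y\<in>S. muv (\<mu> n) y))) sequentially"
    by eventually_elim (use graphs A5iii_n ab in \<open>auto simp: pos_divide_le_eq\<close>)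
  show "((\<lambda>\<delta>. limsup (\<lambda>n.
        Sup {ereal (\<beta> n * \<bar>qhk (\<mu> n) (nat \<lfloor>\<gamma> n * t\<rfloor>) x y - qhk (\<mu> n) (nat \<lfloor>\<gamma> n * t\<rfloor>) x z\<bar>) | x y z t.
               x \<in> gball (V n) (\<mu> n) \<rho> (\<alpha> n * r) \<and> y \<in> gball (V n) (\<mu> n) \<rho> (\<alpha> n * r) \<and>
               z \<in> gball (V n) (\<mu> n) \<rho> (\<alpha> n * r) \<and>
               real (gdist (\<mu> n) y z) \<le> \<alpha> n * \<delta> \<and> t \<in> {a..b}}))
      \<longlongrightarrow> 0) (at_right 0)"
    using limsup_tendsto_0_at_right[OF eventually_Sup_scaled_qhk_diff_le[OF large c \<kappa> \<epsilon> C r ab]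
        tendsto_sqrt_powr_at_right_0[OF \<kappa>]]
    by blast
qed

end
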